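(* Let $A$ be a commutative $K$-algebra, $\mathcal{D}=\mathcal{D}(A)$, and $\mathcal{D}_{[0]}=\{\delta\in\mathcal{D}\mid\delta*1=0\}$. Then: (1) The set of left $\mathcal{D}$-submodules of the $\mathcal{D}$-module $A$ equals the set of $\mathcal{D}$-stable ideals of $A$ (ideals $\mathfrak{a}$ with $\mathcal{D}*\mathfrak{a}\subseteq\mathfrak{a}$). (2) The $\mathcal{D}$-module $A$ is simple if and only if $A$ has no nonzero proper $\mathcal{D}$-stable ideal. (3) The map $\mathfrak{a}\mapsto\mathfrak{a}+\mathcal{D}_{[0]}$, from the set of $\mathcal{D}$-stable ideals of $A$ containing $\mathcal{D}_{[0]}*A$ to the set of ideals of $\mathcal{D}$ containing $\mathcal{D}_{[0]}$, is a bijection with inverse $I\mapsto I\cap A$. The ideal $\mathcal{D}\mathcal{D}_{[0]}\mathcal{D}=\mathcal{D}_{[0]}*A+\mathcal{D}_{[0]}$ is the least ideal of $\mathcal{D}$ containing $\mathcal{D}_{[0]}$, and $\mathcal{D}_{[0]}*A=A\cap\mathcal{D}\mathcal{D}_{[0]}\mathcal{D}$ is a $\mathcal{D}$-stable ideal of $A$.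
   Context: $\mathcal{D}(A)=\bigcup_{i\ge0}\mathcal{D}(A)_i\subseteq\mathrm{End}_K(A)$ with $\mathcal{D}(A)_{-1}=0$, $\mathcal{D}(A)_i=\{u\mid au-ua\in\mathcal{D}(A)_{i-1}\ \forall a\in A\}$; $A\subseteq\mathcal{D}(A)$ via multiplication operators. $A$ is a left $\mathcal{D}(A)$-module via $\delta*a=\delta(a)$, and $\mathcal{D}_{[0]}*A$ denotes the $K$-span of $\{\delta*a\mid\delta\in\mathcal{D}_{[0]},a\in A\}$. *)

theory Defs
  imports Main
begin

text \<open>The commutative K-algebra A is modelled as a type 'a of class comm_ring_1, with the
  structure map phi : K -> A (a ring homomorphism from a commutative ring 'k).
  Operators on A are functions 'a => 'a; D(A) is a ring under pointwise addition and composition.\<close>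

definition alg_hom :: "('k::comm_ring_1 \<Rightarrow> 'a::comm_ring_1) \<Rightarrow> bool" where
  "alg_hom \<phi> \<longleftrightarrow> \<phi> 1 = 1 \<and> (\<forall>x y. \<phi> (x + y) = \<phi> x + \<phi> y) \<and> (\<forall>x y. \<phi> (x * y) = \<phi> x * \<phi> y)"

definition Klin :: "('k::comm_ring_1 \<Rightarrow> 'a::comm_ring_1) \<Rightarrow> ('a \<Rightarrow> 'a) \<Rightarrow> bool" where
  "Klin \<phi> u \<longleftrightarrow> (\<forall>x y. u (x + y) = u x + u y) \<and> (\<forall>k x. u (\<phi> k * x) = \<phi> k * u x)"

definition mop :: "'a::comm_ring_1 \<Rightarrow> 'a \<Rightarrow> 'a" where
  "mop a = (\<lambda>x. a * x)"

text \<open>Dfilt phi n = D(A)_(n-1); so Dfilt phi 0 = D(A)_(-1) = 0.\<close>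
fun Dfilt :: "('k::comm_ring_1 \<Rightarrow> 'a::comm_ring_1) \<Rightarrow> nat \<Rightarrow> ('a \<Rightarrow> 'a) set" where
  "Dfilt \<phi> 0 = {\<lambda>x. 0}"
| "Dfilt \<phi> (Suc n) = {u. Klin \<phi> u \<and> (\<forall>a. (\<lambda>x. a * u x - u (a * x)) \<in> Dfilt \<phi> n)}"

definition Diff :: "('k::comm_ring_1 \<Rightarrow> 'a::comm_ring_1) \<Rightarrow> ('a \<Rightarrow> 'a) set" where
  "Diff \<phi> = (\<Union>n. Dfilt \<phi> n)"

definition D0 :: "('k::comm_ring_1 \<Rightarrow> 'a::comm_ring_1) \<Rightarrow> ('a \<Rightarrow> 'a) set" where
  "D0 \<phi> = {\<delta> \<in> Diff \<phi>. \<delta> 1 = 0}"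

definition ideal_of :: "'a::comm_ring_1 set \<Rightarrow> bool" where
  "ideal_of I \<longleftrightarrow> 0 \<in> I \<and> (\<forall>x\<in>I. \<forall>y\<in>I. x + y \<in> I) \<and> (\<forall>a. \<forall>x\<in>I. a * x \<in> I)"

definition Dstable_ideal :: "('k::comm_ring_1 \<Rightarrow> 'a::comm_ring_1) \<Rightarrow> 'a set \<Rightarrow> bool" where
  "Dstable_ideal \<phi> I \<longleftrightarrow> ideal_of I \<and> (\<forall>\<delta>\<in>Diff \<phi>. \<forall>x\<in>I. \<delta> x \<in> I)"

definition Dsubmodule :: "('k::comm_ring_1 \<Rightarrow> 'a::comm_ring_1) \<Rightarrow> 'a set \<Rightarrow> bool" where
  "Dsubmodule \<phi> M \<longleftrightarrow> 0 \<in> M \<and> (\<forall>x\<in>M. \<forall>y\<in>M. x + y \<in> M) \<and> (\<forall>x\<in>M. - x \<in> M)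
     \<and> (\<forall>\<delta>\<in>Diff \<phi>. \<forall>x\<in>M. \<delta> x \<in> M)"

definition Dsimple :: "('k::comm_ring_1 \<Rightarrow> 'a::comm_ring_1) \<Rightarrow> bool" where
  "Dsimple \<phi> \<longleftrightarrow> (UNIV::'a set) \<noteq> {0} \<and> (\<forall>M. Dsubmodule \<phi> M \<longrightarrow> M = {0} \<or> M = UNIV)"

definition Dideal :: "('k::comm_ring_1 \<Rightarrow> 'a::comm_ring_1) \<Rightarrow> ('a \<Rightarrow> 'a) set \<Rightarrow> bool" where
  "Dideal \<phi> I \<longleftrightarrow> I \<subseteq> Diff \<phi> \<and> (\<lambda>x. 0) \<in> I \<and> (\<forall>u\<in>I. \<forall>v\<in>I. (\<lambda>x. u x + v x) \<in> I)
     \<and> (\<forall>u\<in>I. (\<lambda>x. - u x) \<in> I)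
     \<and> (\<forall>d\<in>Diff \<phi>. \<forall>u\<in>I. d \<circ> u \<in> I \<and> u \<circ> d \<in> I)"

inductive_set D0A :: "('k::comm_ring_1 \<Rightarrow> 'a::comm_ring_1) \<Rightarrow> 'a set" for \<phi> where
  zero: "0 \<in> D0A \<phi>"
| gen: "\<delta> \<in> D0 \<phi> \<Longrightarrow> \<delta> a \<in> D0A \<phi>"
| smult: "x \<in> D0A \<phi> \<Longrightarrow> \<phi> k * x \<in> D0A \<phi>"
| add: "x \<in> D0A \<phi> \<Longrightarrow> y \<in> D0A \<phi> \<Longrightarrow> x + y \<in> D0A \<phi>"

inductive_set DD0D :: "('k::comm_ring_1 \<Rightarrow> 'a::comm_ring_1) \<Rightarrow> ('a \<Rightarrow> 'a) set" for \<phi> where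
  zero: "(\<lambda>x. 0) \<in> DD0D \<phi>"
| gen: "d \<in> Diff \<phi> \<Longrightarrow> \<delta> \<in> D0 \<phi> \<Longrightarrow> e \<in> Diff \<phi> \<Longrightarrow> d \<circ> \<delta> \<circ> e \<in> DD0D \<phi>"
| add: "u \<in> DD0D \<phi> \<Longrightarrow> v \<in> DD0D \<phi> \<Longrightarrow> (\<lambda>x. u x + v x) \<in> DD0D \<phi>"
| neg: "u \<in> DD0D \<phi> \<Longrightarrow> (\<lambda>x. - u x) \<in> DD0D \<phi>"

text \<open>For a subset a of A (viewed in D via multiplication operators) and S in D: a + S.\<close>
definition opsum :: "'a::comm_ring_1 set \<Rightarrow> ('a \<Rightarrow> 'a) set \<Rightarrow> ('a \<Rightarrow> 'a) set" where
  "opsum a S = {(\<lambda>x. mop b x + \<delta> x) | b \<delta>. b \<in> a \<and> \<delta> \<in> S}"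

definition capA :: "('a::comm_ring_1 \<Rightarrow> 'a) set \<Rightarrow> 'a set" where
  "capA I = {b. mop b \<in> I}"

end

theory Submission
  imports Defs
begin

text \<open>Every differential operator w splits as w = w(1) + (w - w(1)), a multiplication operator
  plus an element of D0. Hence a + D0 = {w \<in> D | w(1) \<in> a}, and everything reduces to evaluation
  at 1: an ideal J \<supseteq> D0 of D contains w iff it contains the multiplication operator w(1), and
  a + D0 is closed under right multiplication by D because a \<supseteq> D0*A forces
  w(y) = w(1) y + (w - w(1))(y) \<in> a. Since multiplication operators lie in D, the D-submodules
  of A are exactly its D-stable ideals.\<close>

lemma Klin_add: "Klin \<phi> u \<Longrightarrow> u (x + y) = u x + u y"
  by (simp add: Klin_def)

lemma Klin_zero: "Klin \<phi> u \<Longrightarrow> u 0 = 0"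
  using Klin_add[of \<phi> u 0 0] by simp

lemma Klin_minus: "Klin \<phi> u \<Longrightarrow> u (- x) = - u x"
  using Klin_add[of \<phi> u x "- x"] Klin_zero[of \<phi> u] by (simp add: eq_neg_iff_add_eq_0 add.commute)

lemma Klin_diff: "Klin \<phi> u \<Longrightarrow> u (x - y) = u x - u y"
  using Klin_add[of \<phi> u x "- y"] Klin_minus[of \<phi> u y] by simp

lemma Dfilt_Klin: "u \<in> Dfilt \<phi> n \<Longrightarrow> Klin \<phi> u"
  by (cases n) (auto simp: Klin_def)

lemma zero_in_Dfilt: "(\<lambda>x. 0) \<in> Dfilt \<phi> n"
  by (induction n) (auto simp: Klin_def)

lemma Dfilt_mono: "n \<le> m \<Longrightarrow> Dfilt \<phi> n \<subseteq> Dfilt \<phi> m"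
proof (rule lift_Suc_mono_le[of "Dfilt \<phi>"])
  show "Dfilt \<phi> k \<subseteq> Dfilt \<phi> (Suc k)" for k
    by (induction k) (use zero_in_Dfilt[of \<phi> 1] in auto)
qed

lemma Dfilt_add: "u \<in> Dfilt \<phi> n \<Longrightarrow> v \<in> Dfilt \<phi> n \<Longrightarrow> (\<lambda>x. u x + v x) \<in> Dfilt \<phi> n"
proof (induction n arbitrary: u v)
  case (Suc n)
  have "(\<lambda>x. a * (u x + v x) - (u (a * x) + v (a * x))) \<in> Dfilt \<phi> n" for a
  proof -
    have "(\<lambda>x. a * (u x + v x) - (u (a * x) + v (a * x)))
        = (\<lambda>x. (a * u x - u (a * x)) + (a * v x - v (a * x)))"
      by (simp add: algebra_simps)
    with Suc show ?thesis by simp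
  qed
  moreover have "Klin \<phi> (\<lambda>x. u x + v x)"
    using Suc.prems by (auto simp: Klin_def algebra_simps)
  ultimately show ?case by simp
qed simp

lemma Dfilt_minus: "u \<in> Dfilt \<phi> n \<Longrightarrow> (\<lambda>x. - u x) \<in> Dfilt \<phi> n"
proof (induction n arbitrary: u)
  case (Suc n)
  have "(\<lambda>x. a * - u x - - u (a * x)) \<in> Dfilt \<phi> n" for a
  proof -
    have "(\<lambda>x. a * u x - u (a * x)) \<in> Dfilt \<phi> n"
      using Suc.prems by simp
    then have "(\<lambda>x. - (a * u x - u (a * x))) \<in> Dfilt \<phi> n"
      by (rule Suc.IH)
    moreover have "(\<lambda>x. a * - u x - - u (a * x)) = (\<lambda>x. - (a * u x - u (a * x)))"
      by (simp add: algebra_simps)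
    ultimately show ?thesis
      by (simp only:)
  qed
  moreover have "Klin \<phi> (\<lambda>x. - u x)"
    using Suc.prems by (auto simp: Klin_def algebra_simps)
  ultimately show ?case by simp
qed simp

text \<open>The commutator of \<open>a\<close> with \<open>u \<circ> v\<close> is \<open>[a, u] \<circ> v + u \<circ> [a, v]\<close>, which lowers \<open>n + m\<close>.\<close>

lemma Dfilt_comp: "u \<in> Dfilt \<phi> n \<Longrightarrow> v \<in> Dfilt \<phi> m \<Longrightarrow> u \<circ> v \<in> Dfilt \<phi> (n + m)"
proof (induction "n + m" arbitrary: n m u v rule: less_induct)
  case less
  show ?case
  proof (cases n)
    case 0
    then show ?thesis using less.prems(1) zero_in_Dfilt by (simp add: o_def)
  next
    case n: (Suc n')
    show ?thesis
    proof (cases m)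
      case 0
      then have "u \<circ> v = (\<lambda>x. 0)"
        using less.prems Klin_zero[OF Dfilt_Klin[OF less.prems(1)]] by (auto simp: o_def)
      then show ?thesis using zero_in_Dfilt by simp
    next
      case m: (Suc m')
      have ku: "Klin \<phi> u" and kv: "Klin \<phi> v"
        using less.prems by (auto intro: Dfilt_Klin)
      have "(\<lambda>x. a * (u \<circ> v) x - (u \<circ> v) (a * x)) \<in> Dfilt \<phi> (Suc (n' + m'))" for a
      proof -
        define cu where "cu = (\<lambda>x. a * u x - u (a * x))"
        define cv where "cv = (\<lambda>x. a * v x - v (a * x))"
        have "cu \<in> Dfilt \<phi> n'" "cv \<in> Dfilt \<phi> m'"
          using less.prems n m by (simp_all add: cu_def cv_def)
        then have "cu \<circ> v \<in> Dfilt \<phi> (n' + m)" "u \<circ> cv \<in> Dfilt \<phi> (n + m')"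
          using less.hyps[of n' m cu v] less.hyps[of n m' u cv] less.prems n m by simp_all
        moreover have "n' + m = Suc (n' + m')" "n + m' = Suc (n' + m')"
          using n m by simp_all
        ultimately have "(\<lambda>x. (cu \<circ> v) x + (u \<circ> cv) x) \<in> Dfilt \<phi> (Suc (n' + m'))"
          using Dfilt_add by metis
        moreover have "(\<lambda>x. a * (u \<circ> v) x - (u \<circ> v) (a * x)) = (\<lambda>x. (cu \<circ> v) x + (u \<circ> cv) x)"
          by (auto simp: cu_def cv_def Klin_diff[OF ku])
        ultimately show ?thesis
          by simp
      qed
      moreover have "Klin \<phi> (u \<circ> v)"
        using ku kv by (auto simp: Klin_def)
      ultimately show ?thesis using n m by simp
    qed
  qed
qed

lemma Diff_Klin: "u \<in> Diff \<phi> \<Longrightarrow> Klin \<phi> u"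
  by (auto simp: Diff_def intro: Dfilt_Klin)

lemma zero_in_Diff: "(\<lambda>x. 0) \<in> Diff \<phi>"
  using zero_in_Dfilt by (auto simp: Diff_def)

lemma Diff_add: "u \<in> Diff \<phi> \<Longrightarrow> v \<in> Diff \<phi> \<Longrightarrow> (\<lambda>x. u x + v x) \<in> Diff \<phi>"
proof -
  assume "u \<in> Diff \<phi>" "v \<in> Diff \<phi>"
  then obtain n m where "u \<in> Dfilt \<phi> n" "v \<in> Dfilt \<phi> m"
    by (auto simp: Diff_def)
  then have "u \<in> Dfilt \<phi> (max n m)" "v \<in> Dfilt \<phi> (max n m)"
    using Dfilt_mono[of n "max n m" \<phi>] Dfilt_mono[of m "max n m" \<phi>] by auto
  then show ?thesis
    unfolding Diff_def using Dfilt_add by blast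
qed

lemma Diff_minus: "u \<in> Diff \<phi> \<Longrightarrow> (\<lambda>x. - u x) \<in> Diff \<phi>"
  using Dfilt_minus by (auto simp: Diff_def)

lemma Diff_diff: "u \<in> Diff \<phi> \<Longrightarrow> v \<in> Diff \<phi> \<Longrightarrow> (\<lambda>x. u x - v x) \<in> Diff \<phi>"
  using Diff_add[of u \<phi> "\<lambda>x. - v x"] Diff_minus[of v \<phi>] by simp

lemma Diff_comp: "u \<in> Diff \<phi> \<Longrightarrow> v \<in> Diff \<phi> \<Longrightarrow> u \<circ> v \<in> Diff \<phi>"
proof -
  assume "u \<in> Diff \<phi>" "v \<in> Diff \<phi>"
  then obtain n m where "u \<in> Dfilt \<phi> n" "v \<in> Dfilt \<phi> m"
    by (auto simp: Diff_def)
  then have "u \<circ> v \<in> Dfilt \<phi> (n + m)"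
    by (rule Dfilt_comp)
  then show ?thesis
    unfolding Diff_def by blast
qed

lemma mop_in_Diff: "mop a \<in> Diff \<phi>"
proof -
  have "mop a \<in> Dfilt \<phi> 1"
    by (auto simp: Klin_def mop_def algebra_simps)
  then show ?thesis
    unfolding Diff_def by blast
qed

lemma id_in_Diff: "id \<in> Diff \<phi>"
  using mop_in_Diff[of 1 \<phi>] by (simp add: mop_def id_def)

lemma minus_in_D0: "\<delta> \<in> D0 \<phi> \<Longrightarrow> (\<lambda>x. - \<delta> x) \<in> D0 \<phi>"
  by (simp add: D0_def Diff_minus)

lemma diff_mop_apply_one_in_D0: "w \<in> Diff \<phi> \<Longrightarrow> (\<lambda>x. w x - mop (w 1) x) \<in> D0 \<phi>"
  by (simp add: D0_def Diff_diff mop_in_Diff) (simp add: mop_def)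

lemma opsum_D0_eq: "opsum I (D0 \<phi>) = {w \<in> Diff \<phi>. w 1 \<in> I}"
proof (intro set_eqI iffI)
  fix w
  assume "w \<in> opsum I (D0 \<phi>)"
  then obtain b \<delta> where w: "w = (\<lambda>x. mop b x + \<delta> x)" "b \<in> I" "\<delta> \<in> D0 \<phi>"
    by (auto simp: opsum_def)
  then have "\<delta> \<in> Diff \<phi>"
    by (simp add: D0_def)
  with w(1) have "w \<in> Diff \<phi>"
    using Diff_add[OF mop_in_Diff] by blast
  with w show "w \<in> {w \<in> Diff \<phi>. w 1 \<in> I}"
    by (simp add: D0_def mop_def)
next
  fix w
  assume w: "w \<in> {w \<in> Diff \<phi>. w 1 \<in> I}"
  then have "\<exists>b \<delta>. w = (\<lambda>x. mop b x + \<delta> x) \<and> b \<in> I \<and> \<delta> \<in> D0 \<phi>"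
    using diff_mop_apply_one_in_D0[of w \<phi>]
    by (intro exI[of _ "w 1"] exI[of _ "\<lambda>x. w x - mop (w 1) x"]) auto
  then show "w \<in> opsum I (D0 \<phi>)"
    by (simp add: opsum_def)
qed

lemma capA_opsum_D0: "capA (opsum I (D0 \<phi>)) = I"
  by (auto simp: opsum_D0_eq capA_def mop_in_Diff) (simp_all add: mop_def)

lemma
  assumes "ideal_of I"
  shows ideal_zero: "0 \<in> I"
    and ideal_add: "x \<in> I \<Longrightarrow> y \<in> I \<Longrightarrow> x + y \<in> I"
    and ideal_mult: "x \<in> I \<Longrightarrow> a * x \<in> I"
    and ideal_minus: "x \<in> I \<Longrightarrow> - x \<in> I"
  using assms unfolding ideal_of_def by (blast, blast, blast, metis mult_minus1)

lemma
  assumes "Dideal \<phi> J"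
  shows Dideal_Diff: "u \<in> J \<Longrightarrow> u \<in> Diff \<phi>"
    and Dideal_zero: "(\<lambda>x. 0) \<in> J"
    and Dideal_add: "u \<in> J \<Longrightarrow> v \<in> J \<Longrightarrow> (\<lambda>x. u x + v x) \<in> J"
    and Dideal_minus: "u \<in> J \<Longrightarrow> (\<lambda>x. - u x) \<in> J"
    and Dideal_comp_left: "d \<in> Diff \<phi> \<Longrightarrow> u \<in> J \<Longrightarrow> d \<circ> u \<in> J"
    and Dideal_comp_right: "d \<in> Diff \<phi> \<Longrightarrow> u \<in> J \<Longrightarrow> u \<circ> d \<in> J"
  using assms unfolding Dideal_def by blast+

lemma Dsubmodule_iff_Dstable_ideal: "Dsubmodule \<phi> M \<longleftrightarrow> Dstable_ideal \<phi> M"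
proof
  assume M: "Dsubmodule \<phi> M"
  have "a * x \<in> M" if "x \<in> M" for a x
    using M that mop_in_Diff[of a \<phi>] unfolding Dsubmodule_def by (metis mop_def)
  with M show "Dstable_ideal \<phi> M"
    unfolding Dsubmodule_def Dstable_ideal_def ideal_of_def by blast
next
  assume "Dstable_ideal \<phi> M"
  then show "Dsubmodule \<phi> M"
    using ideal_minus unfolding Dsubmodule_def Dstable_ideal_def ideal_of_def by blast
qed

lemma Dsimple_iff_no_proper_Dstable_ideal:
  assumes "(0::'a::comm_ring_1) \<noteq> 1"
  shows "Dsimple (\<phi> :: 'k::comm_ring_1 \<Rightarrow> 'a) \<longleftrightarrow> \<not> (\<exists>I. Dstable_ideal \<phi> I \<and> I \<noteq> {0} \<and> I \<noteq> UNIV)"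
proof -
  have "(UNIV :: 'a set) \<noteq> {0}"
    using assms by (metis UNIV_I singletonD)
  then show ?thesis
    unfolding Dsimple_def using Dsubmodule_iff_Dstable_ideal by blast
qed

lemma D0A_subset_ideal:
  assumes "ideal_of I" and "\<And>\<delta> a. \<delta> \<in> D0 \<phi> \<Longrightarrow> \<delta> a \<in> I"
  shows "D0A \<phi> \<subseteq> I"
proof
  show "x \<in> I" if "x \<in> D0A \<phi>" for x
    using that by induction (auto intro: assms ideal_zero ideal_add ideal_mult)
qed

text \<open>Closure under negation comes from D0, not from \<open>\<phi> (-1) = -1\<close>.\<close>

lemma D0A_minus: "x \<in> D0A \<phi> \<Longrightarrow> - x \<in> D0A \<phi>"
proof (induction rule: D0A.induct)
  case (gen \<delta> a)
  show ?case using D0A.gen[OF minus_in_D0[OF gen]] by simp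
next
  case (smult x k)
  show ?case using D0A.smult[OF smult.IH, of k] by simp
next
  case (add x y)
  show ?case using D0A.add[OF add.IH] by simp
qed (simp add: D0A.zero)

lemma Diff_apply_mem_ideal:
  assumes "ideal_of I" "D0A \<phi> \<subseteq> I" "u \<in> Diff \<phi>" "u 1 \<in> I"
  shows "u y \<in> I"
proof -
  have "u y - u 1 * y \<in> I"
    using D0A.gen[OF diff_mop_apply_one_in_D0[OF assms(3)], of y] assms(2) by (auto simp: mop_def)
  moreover have "u 1 * y \<in> I"
    using ideal_mult[OF assms(1,4)] by (simp add: mult.commute)
  ultimately have "(u y - u 1 * y) + u 1 * y \<in> I"
    by (rule ideal_add[OF assms(1)])
  then show ?thesis
    by simp
qed

lemma Dideal_opsum_D0:
  assumes "Dstable_ideal \<phi> I" "D0A \<phi> \<subseteq> I"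
  shows "Dideal \<phi> (opsum I (D0 \<phi>))"
proof -
  have I: "ideal_of I" and stable: "\<And>\<delta> x. \<delta> \<in> Diff \<phi> \<Longrightarrow> x \<in> I \<Longrightarrow> \<delta> x \<in> I"
    using assms(1) by (auto simp: Dstable_ideal_def)
  show ?thesis
    unfolding Dideal_def opsum_D0_eq
  proof (intro conjI ballI subsetI)
    fix d u
    assume d: "d \<in> Diff \<phi>" and "u \<in> {w \<in> Diff \<phi>. w 1 \<in> I}"
    then have u: "u \<in> Diff \<phi>" "u 1 \<in> I"
      by simp_all
    show "d \<circ> u \<in> {w \<in> Diff \<phi>. w 1 \<in> I}"
      using Diff_comp[OF d u(1)] stable[OF d u(2)] by simp
    show "u \<circ> d \<in> {w \<in> Diff \<phi>. w 1 \<in> I}"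
      using Diff_comp[OF u(1) d] Diff_apply_mem_ideal[OF I assms(2) u] by simp
  qed (use zero_in_Diff Diff_add Diff_minus ideal_zero[OF I] ideal_add[OF I] ideal_minus[OF I] in auto)
qed

lemma D0_subset_opsum_D0: "ideal_of I \<Longrightarrow> D0 \<phi> \<subseteq> opsum I (D0 \<phi>)"
  unfolding opsum_D0_eq by (auto simp: D0_def ideal_zero)

lemma mop_apply_one_in_Dideal:
  assumes "Dideal \<phi> J" "D0 \<phi> \<subseteq> J" "w \<in> J"
  shows "mop (w 1) \<in> J"
proof -
  have "(\<lambda>x. - (w x - mop (w 1) x)) \<in> J"
    using assms diff_mop_apply_one_in_D0[OF Dideal_Diff] Dideal_minus by blast
  from Dideal_add[OF assms(1,3) this] show ?thesis
    by simp
qed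

lemma Dstable_ideal_capA:
  assumes J: "Dideal \<phi> J" "D0 \<phi> \<subseteq> J"
  shows "Dstable_ideal \<phi> (capA J)"
proof -
  have "mop 0 \<in> J"
    using Dideal_zero[OF J(1)] by (simp add: mop_def)
  moreover have "mop (x + y) \<in> J" if "mop x \<in> J" "mop y \<in> J" for x y
  proof -
    have "mop (x + y) = (\<lambda>z. mop x z + mop y z)"
      by (auto simp: mop_def algebra_simps)
    then show ?thesis
      using Dideal_add[OF J(1) that] by simp
  qed
  moreover have "mop (a * x) \<in> J" if "mop x \<in> J" for a x
    using Dideal_comp_left[OF J(1) mop_in_Diff that] by (simp add: mop_def o_def mult.assoc)
  moreover have "mop (\<delta> x) \<in> J" if "\<delta> \<in> Diff \<phi>" "mop x \<in> J" for \<delta> x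
    using mop_apply_one_in_Dideal[OF J Dideal_comp_left[OF J(1) that]] by (simp add: mop_def)
  ultimately show ?thesis
    unfolding Dstable_ideal_def ideal_of_def capA_def by blast
qed

lemma D0A_subset_capA:
  assumes J: "Dideal \<phi> J" "D0 \<phi> \<subseteq> J"
  shows "D0A \<phi> \<subseteq> capA J"
proof (rule D0A_subset_ideal)
  show "ideal_of (capA J)"
    using Dstable_ideal_capA[OF J] by (simp add: Dstable_ideal_def)
  show "\<delta> a \<in> capA J" if "\<delta> \<in> D0 \<phi>" for \<delta> a
  proof -
    have "\<delta> \<circ> mop a \<in> J"
      using that J Dideal_comp_right[OF J(1) mop_in_Diff] by blast
    from mop_apply_one_in_Dideal[OF J this] show ?thesis
      by (simp add: capA_def mop_def)
  qed
qed

lemma opsum_D0_capA: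
  assumes J: "Dideal \<phi> J" "D0 \<phi> \<subseteq> J"
  shows "opsum (capA J) (D0 \<phi>) = J"
  unfolding opsum_D0_eq capA_def
proof (intro set_eqI iffI)
  fix w
  assume "w \<in> {w \<in> Diff \<phi>. w 1 \<in> {b. mop b \<in> J}}"
  then have "w \<in> Diff \<phi>" "mop (w 1) \<in> J"
    by auto
  with J have "(\<lambda>x. mop (w 1) x + (w x - mop (w 1) x)) \<in> J"
    using diff_mop_apply_one_in_D0 Dideal_add by blast
  then show "w \<in> J"
    by simp
next
  fix w
  assume "w \<in> J"
  then show "w \<in> {w \<in> Diff \<phi>. w 1 \<in> {b. mop b \<in> J}}"
    using Dideal_Diff[OF J(1)] mop_apply_one_in_Dideal[OF J] by auto
qed

lemma bij_betw_opsum_D0: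
  "bij_betw (\<lambda>I. opsum I (D0 \<phi>))
     {I. Dstable_ideal \<phi> I \<and> D0A \<phi> \<subseteq> I} {J. Dideal \<phi> J \<and> D0 \<phi> \<subseteq> J}"
proof (rule bij_betw_byWitness[where f' = capA])
  show "(\<lambda>I. opsum I (D0 \<phi>)) ` {I. Dstable_ideal \<phi> I \<and> D0A \<phi> \<subseteq> I} \<subseteq> {J. Dideal \<phi> J \<and> D0 \<phi> \<subseteq> J}"
    using Dideal_opsum_D0 D0_subset_opsum_D0 unfolding Dstable_ideal_def by blast
  show "capA ` {J. Dideal \<phi> J \<and> D0 \<phi> \<subseteq> J} \<subseteq> {I. Dstable_ideal \<phi> I \<and> D0A \<phi> \<subseteq> I}"
    using Dstable_ideal_capA D0A_subset_capA by blast
qed (simp_all add: capA_opsum_D0 opsum_D0_capA)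

lemma DD0D_Diff: "u \<in> DD0D \<phi> \<Longrightarrow> u \<in> Diff \<phi>"
proof (induction rule: DD0D.induct)
  case zero
  show ?case by (rule zero_in_Diff)
next
  case (gen d \<delta> e)
  then have "\<delta> \<in> Diff \<phi>"
    by (simp add: D0_def)
  with gen show ?case
    by (intro Diff_comp)
next
  case (add u v)
  then show ?case by (simp add: Diff_add)
next
  case (neg u)
  then show ?case by (simp add: Diff_minus)
qed

lemma DD0D_comp_left: "u \<in> DD0D \<phi> \<Longrightarrow> d \<in> Diff \<phi> \<Longrightarrow> d \<circ> u \<in> DD0D \<phi>"
proof (induction rule: DD0D.induct)
  case zero
  have "d 0 = 0"
    using Klin_zero[OF Diff_Klin[OF zero]] .
  then show ?case
    using DD0D.zero by (simp add: o_def)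
next
  case (gen d' \<delta> e)
  have "d \<circ> (d' \<circ> \<delta> \<circ> e) = (d \<circ> d') \<circ> \<delta> \<circ> e"
    by (simp add: o_assoc)
  then show ?case
    using gen DD0D.gen Diff_comp by metis
next
  case (add u v)
  then show ?case
    using DD0D.add[OF add.IH] Klin_add[OF Diff_Klin[OF add.prems]] by (simp add: o_def)
next
  case (neg u)
  then show ?case
    using DD0D.neg[OF neg.IH] Klin_minus[OF Diff_Klin[OF neg.prems]] by (simp add: o_def)
qed

lemma DD0D_comp_right: "u \<in> DD0D \<phi> \<Longrightarrow> d \<in> Diff \<phi> \<Longrightarrow> u \<circ> d \<in> DD0D \<phi>"
proof (induction rule: DD0D.induct)
  case (gen d' \<delta> e)
  have "d' \<circ> \<delta> \<circ> e \<circ> d = d' \<circ> \<delta> \<circ> (e \<circ> d)"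
    by (simp add: o_assoc)
  then show ?case
    using gen DD0D.gen Diff_comp by metis
qed (auto simp: o_def intro: DD0D.intros)

lemma Dideal_DD0D: "Dideal \<phi> (DD0D \<phi>)"
  unfolding Dideal_def
proof (intro conjI ballI subsetI)
  fix d u
  assume "d \<in> Diff \<phi>" "u \<in> DD0D \<phi>"
  then show "d \<circ> u \<in> DD0D \<phi>" "u \<circ> d \<in> DD0D \<phi>"
    by (simp_all add: DD0D_comp_left DD0D_comp_right)
qed (simp_all add: DD0D.zero DD0D.add DD0D.neg DD0D_Diff)

lemma D0_subset_DD0D: "D0 \<phi> \<subseteq> DD0D \<phi>"
  using DD0D.gen[OF id_in_Diff _ id_in_Diff] by fastforce

lemma DD0D_subset_Dideal:
  assumes J: "Dideal \<phi> J" "D0 \<phi> \<subseteq> J"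
  shows "DD0D \<phi> \<subseteq> J"
proof
  show "u \<in> J" if "u \<in> DD0D \<phi>" for u
    using that
  proof induction
    case (gen d \<delta> e)
    then show ?case
      using J Dideal_comp_left[OF J(1)] Dideal_comp_right[OF J(1)] by blast
  qed (use Dideal_zero[OF J(1)] Dideal_add[OF J(1)] Dideal_minus[OF J(1)] in auto)
qed

lemma DD0D_apply_one_in_D0A: "u \<in> DD0D \<phi> \<Longrightarrow> u 1 \<in> D0A \<phi>"
proof (induction rule: DD0D.induct)
  case (gen d \<delta> e)
  have "\<delta> \<in> Diff \<phi>"
    using gen(2) by (simp add: D0_def)
  then have "d \<circ> \<delta> \<in> Diff \<phi>"
    using gen(1) by (rule Diff_comp[rotated])
  then have "d \<circ> \<delta> \<in> D0 \<phi>"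
    using gen Klin_zero[OF Diff_Klin[OF gen(1)]] by (simp add: D0_def)
  from D0A.gen[OF this, of "e 1"] show ?case
    by simp
next
  case zero
  show ?case by (simp add: D0A.zero)
next
  case (add u v)
  then show ?case by (simp add: D0A.add)
next
  case (neg u)
  then show ?case by (simp add: D0A_minus)
qed

lemma D0A_eq_capA_DD0D: "D0A \<phi> = capA (DD0D \<phi>)"
proof
  show "D0A \<phi> \<subseteq> capA (DD0D \<phi>)"
    by (rule D0A_subset_capA[OF Dideal_DD0D D0_subset_DD0D])
  show "capA (DD0D \<phi>) \<subseteq> D0A \<phi>"
    using DD0D_apply_one_in_D0A by (force simp: capA_def mop_def)
qed

theorem proposition3p4:
  fixes \<phi> :: "'k::comm_ring_1 \<Rightarrow> 'a::comm_ring_1"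
  assumes "alg_hom \<phi>"
  shows "({M. Dsubmodule \<phi> M} = {I. Dstable_ideal \<phi> I})
    \<and> ((0::'a) \<noteq> 1 \<longrightarrow> (Dsimple \<phi> \<longleftrightarrow> \<not> (\<exists>I. Dstable_ideal \<phi> I \<and> I \<noteq> {0} \<and> I \<noteq> UNIV)))
    \<and> (bij_betw (\<lambda>I. opsum I (D0 \<phi>))
           {I. Dstable_ideal \<phi> I \<and> D0A \<phi> \<subseteq> I} {J. Dideal \<phi> J \<and> D0 \<phi> \<subseteq> J})
    \<and> (\<forall>I. Dstable_ideal \<phi> I \<and> D0A \<phi> \<subseteq> I \<longrightarrow> capA (opsum I (D0 \<phi>)) = I)
    \<and> (\<forall>J. Dideal \<phi> J \<and> D0 \<phi> \<subseteq> J \<longrightarrow> opsum (capA J) (D0 \<phi>) = J)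
    \<and> (DD0D \<phi> = opsum (D0A \<phi>) (D0 \<phi>))
    \<and> (Dideal \<phi> (DD0D \<phi>) \<and> D0 \<phi> \<subseteq> DD0D \<phi>
           \<and> (\<forall>J. Dideal \<phi> J \<and> D0 \<phi> \<subseteq> J \<longrightarrow> DD0D \<phi> \<subseteq> J))
    \<and> (D0A \<phi> = capA (DD0D \<phi>))
    \<and> (Dstable_ideal \<phi> (D0A \<phi>))"
proof (intro conjI)
  show "{M. Dsubmodule \<phi> M} = {I. Dstable_ideal \<phi> I}"
    using Dsubmodule_iff_Dstable_ideal by blast
  show "(0::'a) \<noteq> 1 \<longrightarrow> (Dsimple \<phi> \<longleftrightarrow> \<not> (\<exists>I. Dstable_ideal \<phi> I \<and> I \<noteq> {0} \<and> I \<noteq> UNIV))"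
    using Dsimple_iff_no_proper_Dstable_ideal by blast
  show "bij_betw (\<lambda>I. opsum I (D0 \<phi>))
      {I. Dstable_ideal \<phi> I \<and> D0A \<phi> \<subseteq> I} {J. Dideal \<phi> J \<and> D0 \<phi> \<subseteq> J}"
    by (rule bij_betw_opsum_D0)
  show "\<forall>I. Dstable_ideal \<phi> I \<and> D0A \<phi> \<subseteq> I \<longrightarrow> capA (opsum I (D0 \<phi>)) = I"
    by (simp add: capA_opsum_D0)
  show "\<forall>J. Dideal \<phi> J \<and> D0 \<phi> \<subseteq> J \<longrightarrow> opsum (capA J) (D0 \<phi>) = J"
    using opsum_D0_capA by blast
  show "DD0D \<phi> = opsum (D0A \<phi>) (D0 \<phi>)"
    by (simp add: D0A_eq_capA_DD0D opsum_D0_capA[OF Dideal_DD0D D0_subset_DD0D])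
  show "Dideal \<phi> (DD0D \<phi>)" "D0 \<phi> \<subseteq> DD0D \<phi>"
    by (rule Dideal_DD0D, rule D0_subset_DD0D)
  show "\<forall>J. Dideal \<phi> J \<and> D0 \<phi> \<subseteq> J \<longrightarrow> DD0D \<phi> \<subseteq> J"
    using DD0D_subset_Dideal by blast
  show "D0A \<phi> = capA (DD0D \<phi>)"
    by (rule D0A_eq_capA_DD0D)
  show "Dstable_ideal \<phi> (D0A \<phi>)"
    by (simp only: D0A_eq_capA_DD0D Dstable_ideal_capA[OF Dideal_DD0D D0_subset_DD0D])
qed

end
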